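(* Let $\mathbf X\in\mathbb R^d$ be elliptical with positive definite covariance $\boldsymbol\Sigma=\mathbf V\boldsymbol\Lambda\mathbf V'$ and $\mathbf Y=\mathbf V'\mathbf X$. For $\alpha\in(0,1)$ and $i\in\{1,\dots,d\}$ let $\boldsymbol\Lambda_{i,\alpha}:=\mathrm{Cov}(\mathbf Y\mid Y_i\in\mathsf T^\alpha_{Y_i})$ (the conditioning event having positive probability). Then $\mathrm{Tr}(\boldsymbol\Lambda_{1,\alpha})\le\mathrm{Tr}(\boldsymbol\Lambda_{i,\alpha})\le\mathrm{Tr}(\boldsymbol\Lambda_{d,\alpha})$ for all $i\in\{1,\dots,d\}$; i.e. the preserved total variance is maximized by peeling $Y_d$ and minimized by peeling $Y_1$.
   Context: A random vector $\mathbf X\in\mathbb R^d$ belongs to the elliptical family with parameters $(\boldsymbol\mu,\boldsymbol\Sigma,\phi)$ if its characteristic function is $\mathbb E[e^{i\mathbf t'\mathbf X}]=e^{i\mathbf t'\boldsymbol\mu}\phi(\mathbf t'\boldsymbol\Sigma\mathbf t)$ for all $\mathbf t\in\mathbb R^d$, for some scalar function $\phi$; here $\mathbf X$ is assumed to have finite second moments and covariance matrix $\boldsymbol\Sigma$, positive definite. Spectral decomposition: $\boldsymbol\Sigma=\mathbf V\boldsymbol\Lambda\mathbf V'$ with $\mathbf V$ orthogonal (orthonormal eigenvectors as columns) and $\boldsymbol\Lambda=\mathrm{diag}(\lambda_1,\dots,\lambda_d)$, $\lambda_1\ge\cdots\ge\lambda_d>0$. For a real random variable $W$, $Q_W(p)=\inf\{x:\mathbb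 P(W\le x)\ge p\}$ and $\mathsf T^\alpha_W:=[Q_W(\alpha/2),Q_W(1-\alpha/2)]$. *)

theory Defs
  imports "HOL-Probability.Probability"
begin

definition cov_matrix :: "'a measure \<Rightarrow> ('a \<Rightarrow> real^'n) \<Rightarrow> real^'n^'n" where
  "cov_matrix M X = (\<chi> j k. \<integral>\<omega>. (X \<omega> $ j - (\<integral>\<eta>. X \<eta> $ j \<partial>M)) *
                              (X \<omega> $ k - (\<integral>\<eta>. X \<eta> $ k \<partial>M)) \<partial>M)"

definition elliptical :: "'a measure \<Rightarrow> ('a \<Rightarrow> real^'n) \<Rightarrow> real^'n \<Rightarrow> real^'n^'n \<Rightarrow> (real \<Rightarrow> complex) \<Rightarrow> bool" where
  "elliptical M X \<mu> \<Sigma> \<phi> \<longleftrightarrow>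
     (\<forall>t. (\<integral>\<omega>. cis (t \<bullet> X \<omega>) \<partial>M) = cis (t \<bullet> \<mu>) * \<phi> (t \<bullet> (\<Sigma> *v t)))"

definition quantile :: "'a measure \<Rightarrow> ('a \<Rightarrow> real) \<Rightarrow> real \<Rightarrow> real" where
  "quantile M W p = Inf {x. p \<le> measure M {\<omega> \<in> space M. W \<omega> \<le> x}}"

definition central_interval :: "'a measure \<Rightarrow> ('a \<Rightarrow> real) \<Rightarrow> real \<Rightarrow> real set" where
  "central_interval M W \<alpha> = {quantile M W (\<alpha>/2) .. quantile M W (1 - \<alpha>/2)}"

definition cond_mean :: "'a measure \<Rightarrow> 'a set \<Rightarrow> ('a \<Rightarrow> real) \<Rightarrow> real" where
  "cond_mean M A Z = (\<integral>\<omega>. indicator A \<omega> * Z \<omega> \<partial>M) / measure M A"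

definition cond_cov :: "'a measure \<Rightarrow> 'a set \<Rightarrow> ('a \<Rightarrow> real^'n) \<Rightarrow> real^'n^'n" where
  "cond_cov M A Y = (\<chi> j k. cond_mean M A (\<lambda>\<omega>. (Y \<omega> $ j - cond_mean M A (\<lambda>\<eta>. Y \<eta> $ j)) *
                                             (Y \<omega> $ k - cond_mean M A (\<lambda>\<eta>. Y \<eta> $ k))))"

end

theory Submission
  imports Defs
begin

(* Write Y = V'X = V'mu + Lambda^(1/2) Z. For elliptical X the standardised vector Z is spherical:
   its characteristic function is phi (|w|^2). Hence all Z_i share one symmetric law, so the
   central interval of each Y_i corresponds to one interval [l, u] containing 0 for every Z_i,
   and each pair (Z_i, Z_k) with i ~= k has a rotation invariant joint law. Conditionally on
   Z_i in [l, u] the other coordinates then have mean 0 and a common variance a, while the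
   conditional variance b of Z_i itself does not depend on i. Averaging over the rotations of
   (Z_i, Z_k) shows E[Z_i^2; Z_i in [l, u]] <= E[Z_k^2; Z_i in [l, u]], so b <= a, and
   Tr Lambda_(i,alpha) = a * (sum_k lambda_k) + lambda_i * (b - a) decreases with lambda_i. *)

section \<open>Characteristic functions of weighted laws\<close>

lemma char_density_const:
  fixes M :: "real measure"
  assumes "sets M = sets borel" "0 < c"
  shows "char (density M (\<lambda>_. ennreal c)) t = c *\<^sub>R char M t"
proof -
  have "(\<lambda>x. iexp (t * x)) \<in> borel_measurable M"
    using assms(1) by (simp add: measurable_cong_sets[OF assms(1) refl])
  then show ?thesis
    unfolding char_def using assms(2) by (subst integral_density) auto
qed

lemma real_distribution_normalized:
  fixes M :: "real measure"
  assumes "finite_measure M" "sets M = sets borel" "measure M (space M) = m" "0 < m"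
  shows "real_distribution (density M (\<lambda>_. ennreal (1 / m)))"
proof -
  interpret finite_measure M by fact
  have "emeasure (density M (\<lambda>_. ennreal (1 / m))) (space M) = 1"
    using assms(3,4) by (simp add: emeasure_density_const emeasure_eq_measure ennreal_mult'[symmetric])
  then show ?thesis
    unfolding real_distribution_def real_distribution_axioms_def
    using assms(2) by (auto intro!: prob_spaceI simp: space_density)
qed

theorem finite_measure_eq_if_char_eq:
  fixes M1 M2 :: "real measure"
  assumes fin: "finite_measure M1" "finite_measure M2"
    and sets: "sets M1 = sets borel" "sets M2 = sets borel"
    and char_eq: "char M1 = char M2"
  shows "M1 = M2"
proof -
  have char_0: "char M 0 = of_real (measure M (space M))" if "finite_measure M" for M :: "real measure"
    unfolding char_def by (simp add: scaleR_conv_of_real)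
  define m where "m = measure M1 (space M1)"
  have m: "measure M (space M) = m" if "M \<in> {M1, M2}" for M
    using that char_0[OF fin(1)] char_0[OF fin(2)] char_eq m_def by (auto simp: of_real_eq_iff)
  have "emeasure M1 A = emeasure M2 A" if "A \<in> sets borel" for A
  proof (cases "m = 0")
    case True
    have "emeasure M A = 0" if "M \<in> {M1, M2}" "A \<in> sets M" for M
    proof -
      interpret finite_measure M using that fin by auto
      have "emeasure M A \<le> emeasure M (space M)"
        using that by (intro emeasure_mono) (auto dest: sets.sets_into_space)
      then show ?thesis using m[OF that(1)] True by (simp add: emeasure_eq_measure measure_le_0_iff)
    qed
    then show ?thesis using \<open>A \<in> sets borel\<close> sets by simp
  next
    case False
    then have "0 < m" using m_def by (simp add: order_less_le)
    have "density M1 (\<lambda>_. ennreal (1 / m)) = density M2 (\<lambda>_. ennreal (1 / m))"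
      using real_distribution_normalized[OF fin(1) sets(1) m \<open>0 < m\<close>]
        real_distribution_normalized[OF fin(2) sets(2) m \<open>0 < m\<close>]
        char_density_const[OF sets(1)] char_density_const[OF sets(2)] char_eq \<open>0 < m\<close>
      by (intro Levy_uniqueness) (auto simp: fun_eq_iff)
    then have "ennreal (1 / m) * emeasure M1 A = ennreal (1 / m) * emeasure M2 A"
      using emeasure_density_const[of A M1 "ennreal (1 / m)"] emeasure_density_const[of A M2 "ennreal (1 / m)"]
        sets \<open>A \<in> sets borel\<close>
      by simp
    then show ?thesis using \<open>0 < m\<close> by (simp add: ennreal_mult_cancel_left)
  qed
  then show ?thesis using sets by (intro measure_eqI) auto
qed

lemma distr_eq_if_char_eq:
  fixes Z Z' :: "'a \<Rightarrow> real"
  assumes "prob_space M" and [measurable]: "Z \<in> borel_measurable M" "Z' \<in> borel_measurable M"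
    and "\<And>t. (\<integral>\<omega>. iexp (t * Z \<omega>) \<partial>M) = (\<integral>\<omega>. iexp (t * Z' \<omega>) \<partial>M)"
  shows "distr M borel Z = distr M borel Z'"
proof (rule Levy_uniqueness)
  show "real_distribution (distr M borel Z)" "real_distribution (distr M borel Z')"
    using assms(1) by (simp_all add: prob_space.real_distribution_distr)
  show "char (distr M borel Z) = char (distr M borel Z')"
    using assms(4) by (simp add: char_def fun_eq_iff integral_distr)
qed

lemma integral_scaleR_iexp:
  assumes "finite_measure M" and [measurable]: "h \<in> borel_measurable M" "x \<in> borel_measurable M"
    and bounded: "\<And>\<omega>. \<bar>h \<omega>\<bar> \<le> K"
  shows "(\<integral>\<omega>. h \<omega> *\<^sub>R iexp (x \<omega>) \<partial>M)
    = Complex (\<integral>\<omega>. h \<omega> * cos (x \<omega>) \<partial>M) (\<integral>\<omega>. h \<omega> * sin (x \<omega>) \<partial>M)"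
proof -
  have int: "integrable M (\<lambda>\<omega>. h \<omega> *\<^sub>R iexp (x \<omega>))"
    using bounded by (intro finite_measure.integrable_const_bound[OF assms(1), where B=K])
      (auto simp: norm_exp_i_times)
  show ?thesis
    unfolding complex_eq_iff integral_Re[OF int, symmetric] integral_Im[OF int, symmetric]
    by (simp add: Re_exp Im_exp)
qed

lemma finite_measure_distr_density:
  assumes "finite_measure M" "g \<in> borel_measurable M" "\<And>\<omega>. g \<omega> \<le> K" "A \<in> borel_measurable M"
  shows "finite_measure (distr (density M (\<lambda>\<omega>. ennreal (g \<omega>))) borel A)"
proof (rule finite_measure.finite_measure_distr)
  interpret finite_measure M by fact
  have "emeasure (density M (\<lambda>\<omega>. ennreal (g \<omega>))) (space M) = (\<integral>\<^sup>+ \<omega>. ennreal (g \<omega>) \<partial>M)"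
    using assms(2) by (subst emeasure_density) (auto intro!: nn_integral_cong)
  also have "\<dots> \<le> (\<integral>\<^sup>+ \<omega>. ennreal K \<partial>M)"
    by (intro nn_integral_mono ennreal_leI assms(3))
  also have "\<dots> < \<infinity>" using emeasure_finite[of "space M"] by (simp add: ennreal_mult_eq_top_iff less_top[symmetric])
  finally show "finite_measure (density M (\<lambda>\<omega>. ennreal (g \<omega>)))"
    by (intro finite_measureI) (auto simp: space_density)
qed (use assms in simp)

lemma integral_distr_density:
  fixes f :: "real \<Rightarrow> 'b::{banach, second_countable_topology}"
  assumes [measurable]: "g \<in> borel_measurable M" "A \<in> borel_measurable M" "f \<in> borel_measurable borel"
    and "\<And>\<omega>. 0 \<le> g \<omega>"
  shows "integral\<^sup>L (distr (density M (\<lambda>\<omega>. ennreal (g \<omega>))) borel A) f = (\<integral>\<omega>. g \<omega> *\<^sub>R f (A \<omega>) \<partial>M)"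
  using assms(4) by (subst integral_distr) (auto simp: integral_density)

lemma distr_density_eq_if_char_eq:
  assumes "prob_space M" "prob_space N"
    and [measurable]: "g \<in> borel_measurable M" "g' \<in> borel_measurable N"
      "A \<in> borel_measurable M" "A' \<in> borel_measurable N"
    and bounds: "\<And>\<omega>. 0 \<le> g \<omega> \<and> g \<omega> \<le> K" "\<And>\<omega>. 0 \<le> g' \<omega> \<and> g' \<omega> \<le> K"
    and char_eq: "\<And>s. (\<integral>\<omega>. g \<omega> *\<^sub>R iexp (s * A \<omega>) \<partial>M) = (\<integral>\<omega>. g' \<omega> *\<^sub>R iexp (s * A' \<omega>) \<partial>N)"
  shows "distr (density M (\<lambda>\<omega>. ennreal (g \<omega>))) borel A = distr (density N (\<lambda>\<omega>. ennreal (g' \<omega>))) borel A'"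
proof (rule finite_measure_eq_if_char_eq)
  show "finite_measure (distr (density M (\<lambda>\<omega>. ennreal (g \<omega>))) borel A)"
    using assms(1) bounds(1) by (intro finite_measure_distr_density) (auto intro: prob_space.axioms(1))
  show "finite_measure (distr (density N (\<lambda>\<omega>. ennreal (g' \<omega>))) borel A')"
    using assms(2) bounds(2) by (intro finite_measure_distr_density) (auto intro: prob_space.axioms(1))
  show "char (distr (density M (\<lambda>\<omega>. ennreal (g \<omega>))) borel A)
    = char (distr (density N (\<lambda>\<omega>. ennreal (g' \<omega>))) borel A')"
    unfolding char_def using bounds char_eq by (simp add: fun_eq_iff integral_distr_density)
qed simp_all

definition joint_char :: "'a measure \<Rightarrow> ('a \<Rightarrow> real) \<Rightarrow> ('a \<Rightarrow> real) \<Rightarrow> real \<Rightarrow> real \<Rightarrow> complex" where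
  "joint_char M A B s t = (\<integral>\<omega>. iexp (s * A \<omega> + t * B \<omega>) \<partial>M)"

lemma joint_char_diagonal: "joint_char M A A s t = joint_char M A B (s + t) 0"
  unfolding joint_char_def by (simp add: distrib_right)

lemma joint_char_uminus_right: "joint_char M A (\<lambda>\<omega>. - B \<omega>) s t = joint_char M A B s (- t)"
  unfolding joint_char_def by simp

lemma integral_cos_weight_iexp:
  assumes "prob_space M" and [measurable]: "A \<in> borel_measurable M" "B \<in> borel_measurable M"
  shows "(\<integral>\<omega>. (1 + cos (t * B \<omega> + c)) *\<^sub>R iexp (s * A \<omega>) \<partial>M)
    = joint_char M A B s 0 + (iexp c * joint_char M A B s t + iexp (- c) * joint_char M A B s (- t)) / 2"
proof -
  interpret prob_space M by fact
  have int: "integrable M (\<lambda>\<omega>. iexp (s * A \<omega> + u * B \<omega>))" for u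
    by (rule integrable_iexp) auto
  have pointwise: "(1 + cos (t * B \<omega> + c)) *\<^sub>R iexp (s * A \<omega>) = iexp (s * A \<omega> + 0 * B \<omega>)
      + (iexp c * iexp (s * A \<omega> + t * B \<omega>) + iexp (- c) * iexp (s * A \<omega> + (- t) * B \<omega>)) / 2" for \<omega>
    by (simp add: complex_eq_iff Re_exp Im_exp exp_add[symmetric] cos_add sin_add cos_diff sin_diff
        field_simps)
  have int_mult: "integrable M (\<lambda>\<omega>. z * iexp (s * A \<omega> + u * B \<omega>))" for z u
    by (intro integrable_mult_right int)
  have int_sum: "integrable M (\<lambda>\<omega>. (iexp c * iexp (s * A \<omega> + t * B \<omega>)
      + iexp (- c) * iexp (s * A \<omega> + (- t) * B \<omega>)) / 2)"
    by (intro integrable_divide Bochner_Integration.integrable_add int_mult)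
  show ?thesis
    unfolding joint_char_def pointwise
    by (simp only: Bochner_Integration.integral_add[OF int int_sum] integral_divide_zero
        Bochner_Integration.integral_add[OF int_mult int_mult] integral_mult_right_zero)
qed

(* Uniqueness is only used for measures on the line: the nonnegative weight 1 + cos (t B + c)
   turns the joint characteristic function of (A, B) into the characteristic function of a
   finite measure on the A-line, and comparing its mass on S with that for t = 0 isolates the
   cosine moment. *)
lemma integral_indicator_mult_cos_eq_if_joint_char_eq:
  fixes A B :: "'a \<Rightarrow> real" and A' B' :: "'b \<Rightarrow> real"
  assumes M: "prob_space M" and N: "prob_space N"
    and meas[measurable]: "A \<in> borel_measurable M" "B \<in> borel_measurable M"
      "A' \<in> borel_measurable N" "B' \<in> borel_measurable N"
    and [measurable]: "S \<in> sets borel"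
    and joint: "joint_char M A B = joint_char N A' B'"
  shows "(\<integral>\<omega>. indicator S (A \<omega>) * cos (t * B \<omega> + c) \<partial>M)
    = (\<integral>\<omega>. indicator S (A' \<omega>) * cos (t * B' \<omega> + c) \<partial>N)"
proof -
  have cos_bounds: "0 \<le> 1 + cos x \<and> 1 + cos x \<le> 2" for x :: real
    using cos_ge_minus_one[of x] cos_le_one[of x] by linarith
  have split_weight: "(\<integral>\<omega>. (1 + cos (V \<omega>)) * indicator S (U \<omega>) \<partial>L)
      = (\<integral>\<omega>. indicator S (U \<omega>) \<partial>L) + (\<integral>\<omega>. indicator S (U \<omega>) * cos (V \<omega>) \<partial>L)"
    if "prob_space L" and [measurable]: "U \<in> borel_measurable L" "V \<in> borel_measurable L"
    for L :: "'c measure" and U V :: "'c \<Rightarrow> real"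
  proof -
    interpret prob_space L by fact
    have "integrable L (\<lambda>\<omega>. indicator S (U \<omega>) * h (V \<omega>))"
      if bounded: "\<And>x. \<bar>h x\<bar> \<le> 1" and [measurable]: "h \<in> borel_measurable borel"
      for h :: "real \<Rightarrow> real"
    proof (rule integrable_const_bound[where B=1])
      show "AE \<omega> in L. norm (indicator S (U \<omega>) * h (V \<omega>)) \<le> 1"
        using bounded by (auto simp: abs_mult split: split_indicator)
    qed measurable
    from this[of "\<lambda>_. 1"] this[of cos] show ?thesis
      by (subst Bochner_Integration.integral_add[symmetric]) (simp_all add: algebra_simps)
  qed
  have weighted: "(\<integral>\<omega>. (1 + cos (t * B \<omega> + c)) * indicator S (A \<omega>) \<partial>M)
      = (\<integral>\<omega>. (1 + cos (t * B' \<omega> + c)) * indicator S (A' \<omega>) \<partial>N)" for t c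
  proof -
    have "distr (density M (\<lambda>\<omega>. ennreal (1 + cos (t * B \<omega> + c)))) borel A
        = distr (density N (\<lambda>\<omega>. ennreal (1 + cos (t * B' \<omega> + c)))) borel A'"
    proof (rule distr_density_eq_if_char_eq[OF M N _ _ _ _ cos_bounds cos_bounds])
      fix s
      show "(\<integral>\<omega>. (1 + cos (t * B \<omega> + c)) *\<^sub>R iexp (s * A \<omega>) \<partial>M)
        = (\<integral>\<omega>. (1 + cos (t * B' \<omega> + c)) *\<^sub>R iexp (s * A' \<omega>) \<partial>N)"
        by (simp only: integral_cos_weight_iexp[OF M meas(1,2)] integral_cos_weight_iexp[OF N meas(3,4)] joint)
    qed simp_all
    then show ?thesis
      using integral_distr_density[of "\<lambda>\<omega>. 1 + cos (t * B \<omega> + c)" M A "indicator S :: real \<Rightarrow> real"]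
        integral_distr_density[of "\<lambda>\<omega>. 1 + cos (t * B' \<omega> + c)" N A' "indicator S :: real \<Rightarrow> real"] cos_bounds
      by (simp add: real_scaleR_def)
  qed
  show ?thesis
    using weighted[of t c] weighted[of 0 0] split_weight[OF M] split_weight[OF N] by simp
qed

(* The cosine moments with phases 0 and -pi/2 form the characteristic function of the law
   of B weighted by the indicator of A in S. *)
theorem integral_indicator_mult_eq_if_joint_char_eq:
  fixes A B :: "'a \<Rightarrow> real" and A' B' :: "'b \<Rightarrow> real" and f :: "real \<Rightarrow> real"
  assumes M: "prob_space M" and N: "prob_space N"
    and meas[measurable]: "A \<in> borel_measurable M" "B \<in> borel_measurable M"
      "A' \<in> borel_measurable N" "B' \<in> borel_measurable N"
    and S[measurable]: "S \<in> sets borel" and [measurable]: "f \<in> borel_measurable borel"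
    and joint: "joint_char M A B = joint_char N A' B'"
  shows "(\<integral>\<omega>. indicator S (A \<omega>) * f (B \<omega>) \<partial>M) = (\<integral>\<omega>. indicator S (A' \<omega>) * f (B' \<omega>) \<partial>N)"
proof -
  have indicator_bounds: "0 \<le> (indicator S x :: real) \<and> (indicator S x :: real) \<le> 1" for x
    by (simp split: split_indicator)
  have "distr (density M (\<lambda>\<omega>. ennreal (indicator S (A \<omega>)))) borel B
      = distr (density N (\<lambda>\<omega>. ennreal (indicator S (A' \<omega>)))) borel B'"
  proof (rule distr_density_eq_if_char_eq[OF M N _ _ _ _ indicator_bounds indicator_bounds])
    have Fourier_moments: "(\<integral>\<omega>. indicator S (U \<omega>) *\<^sub>R iexp (t * V \<omega>) \<partial>L)
        = Complex (\<integral>\<omega>. indicator S (U \<omega>) * cos (t * V \<omega> + 0) \<partial>L)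
            (\<integral>\<omega>. indicator S (U \<omega>) * cos (t * V \<omega> + - (pi / 2)) \<partial>L)"
      if "prob_space L" and [measurable]: "U \<in> borel_measurable L" "V \<in> borel_measurable L"
      for L :: "'c measure" and U V :: "'c \<Rightarrow> real" and t
      using indicator_bounds
      by (subst integral_scaleR_iexp[OF prob_space.axioms(1)[OF that(1)], where K=1])
        (auto simp: cos_diff)
    fix t
    show "(\<integral>\<omega>. indicator S (A \<omega>) *\<^sub>R iexp (t * B \<omega>) \<partial>M)
      = (\<integral>\<omega>. indicator S (A' \<omega>) *\<^sub>R iexp (t * B' \<omega>) \<partial>N)"
      by (simp only: Fourier_moments[OF M meas(1,2)] Fourier_moments[OF N meas(3,4)]
          integral_indicator_mult_cos_eq_if_joint_char_eq[OF M N meas S joint])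
  qed simp_all
  then show ?thesis
    using integral_distr_density[of "\<lambda>\<omega>. indicator S (A \<omega>)" M B f]
      integral_distr_density[of "\<lambda>\<omega>. indicator S (A' \<omega>)" N B' f] indicator_bounds
    by (simp add: real_scaleR_def)
qed

section \<open>Rotation invariant pairs\<close>

lemma rotation_sum_squares:
  fixes a b :: real
  shows "(cos \<theta> * a - sin \<theta> * b)\<^sup>2 + (sin \<theta> * a + cos \<theta> * b)\<^sup>2 = a\<^sup>2 + b\<^sup>2"
proof -
  have "(cos \<theta> * a - sin \<theta> * b)\<^sup>2 + (sin \<theta> * a + cos \<theta> * b)\<^sup>2 = ((sin \<theta>)\<^sup>2 + (cos \<theta>)\<^sup>2) * (a\<^sup>2 + b\<^sup>2)"
    by algebra
  then show ?thesis by simp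
qed

lemma joint_char_rotation_invariant:
  assumes "\<And>s t. joint_char M U W s t = \<psi> (s\<^sup>2 + t\<^sup>2)"
  shows "joint_char M (\<lambda>\<omega>. cos \<theta> * U \<omega> - sin \<theta> * W \<omega>) (\<lambda>\<omega>. sin \<theta> * U \<omega> + cos \<theta> * W \<omega>)
    = joint_char M U W"
proof (intro ext)
  fix s t
  have "joint_char M (\<lambda>\<omega>. cos \<theta> * U \<omega> - sin \<theta> * W \<omega>) (\<lambda>\<omega>. sin \<theta> * U \<omega> + cos \<theta> * W \<omega>) s t
      = joint_char M U W (cos \<theta> * s + sin \<theta> * t) (cos \<theta> * t - sin \<theta> * s)"
    unfolding joint_char_def by (simp add: algebra_simps)
  also have "\<dots> = joint_char M U W s t"
    using rotation_sum_squares[of \<theta> s "- t"] unfolding assms by (simp add: power2_eq_square algebra_simps)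
  finally show "joint_char M (\<lambda>\<omega>. cos \<theta> * U \<omega> - sin \<theta> * W \<omega>) (\<lambda>\<omega>. sin \<theta> * U \<omega> + cos \<theta> * W \<omega>) s t
      = joint_char M U W s t" .
qed

lemma truncated_moments_rotation_invariant:
  fixes U W :: "'a \<Rightarrow> real" and \<theta> :: real
  assumes M: "prob_space M" and [measurable]: "U \<in> borel_measurable M" "W \<in> borel_measurable M"
    and rotation_invariant: "\<And>s t. joint_char M U W s t = \<psi> (s\<^sup>2 + t\<^sup>2)" and [measurable]: "S \<in> sets borel"
  defines "U\<^sub>\<theta> \<equiv> \<lambda>\<omega>. cos \<theta> * U \<omega> - sin \<theta> * W \<omega>" and "W\<^sub>\<theta> \<equiv> \<lambda>\<omega>. sin \<theta> * U \<omega> + cos \<theta> * W \<omega>"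
  shows "(\<integral>\<omega>. indicator S (U\<^sub>\<theta> \<omega>) * (W\<^sub>\<theta> \<omega>)\<^sup>2 \<partial>M) = (\<integral>\<omega>. indicator S (U \<omega>) * (W \<omega>)\<^sup>2 \<partial>M)"
    and "(\<integral>\<omega>. indicator S (U\<^sub>\<theta> \<omega>) * (U\<^sub>\<theta> \<omega>)\<^sup>2 \<partial>M) = (\<integral>\<omega>. indicator S (U \<omega>) * (U \<omega>)\<^sup>2 \<partial>M)"
proof -
  have joint: "joint_char M U\<^sub>\<theta> W\<^sub>\<theta> = joint_char M U W"
    unfolding U\<^sub>\<theta>_def W\<^sub>\<theta>_def using rotation_invariant by (rule joint_char_rotation_invariant)
  show "(\<integral>\<omega>. indicator S (U\<^sub>\<theta> \<omega>) * (W\<^sub>\<theta> \<omega>)\<^sup>2 \<partial>M) = (\<integral>\<omega>. indicator S (U \<omega>) * (W \<omega>)\<^sup>2 \<partial>M)"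
    using joint unfolding U\<^sub>\<theta>_def W\<^sub>\<theta>_def by (intro integral_indicator_mult_eq_if_joint_char_eq[OF M M]) auto
  have "joint_char M U\<^sub>\<theta> U\<^sub>\<theta> = joint_char M U U"
    using joint by (simp add: fun_eq_iff joint_char_diagonal[where A=U\<^sub>\<theta> and B=W\<^sub>\<theta>] joint_char_diagonal[where A=U and B=W])
  then show "(\<integral>\<omega>. indicator S (U\<^sub>\<theta> \<omega>) * (U\<^sub>\<theta> \<omega>)\<^sup>2 \<partial>M) = (\<integral>\<omega>. indicator S (U \<omega>) * (U \<omega>)\<^sup>2 \<partial>M)"
    unfolding U\<^sub>\<theta>_def W\<^sub>\<theta>_def
    by (intro integral_indicator_mult_eq_if_joint_char_eq[OF M M, where f="\<lambda>y. y\<^sup>2"]) auto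
qed

lemma finite_cos_eq_in_interval: "finite {x \<in> {a..b}. cos x = (d::real)}"
proof (cases "\<bar>d\<bar> \<le> 1")
  case False
  then show ?thesis using abs_cos_le_one by (metis (mono_tags, lifting) empty_Collect_eq finite.emptyI)
next
  case True
  define y where "y = arccos d"
  have "d = cos y" using True unfolding y_def by (simp add: cos_arccos_abs)
  define segment where "segment c = {n \<in> \<int>. (a + c) / (2 * pi) \<le> n \<and> n \<le> (b + c) / (2 * pi)}" for c
  have "{x \<in> {a..b}. cos x = d} \<subseteq> (\<lambda>n. y + 2 * n * pi) ` segment (- y) \<union> (\<lambda>n. - y + 2 * n * pi) ` segment y"
  proof
    fix x assume x: "x \<in> {x \<in> {a..b}. cos x = d}"
    then obtain n where n: "n \<in> \<int>" "x = y + 2 * n * pi \<or> x = - y + 2 * n * pi"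
      using cos_eq[of x y] \<open>d = cos y\<close> by auto
    from n(2) show "x \<in> (\<lambda>n. y + 2 * n * pi) ` segment (- y) \<union> (\<lambda>n. - y + 2 * n * pi) ` segment y"
    proof
      assume x_eq: "x = y + 2 * n * pi"
      then have "n = (x - y) / (2 * pi)" by (simp add: field_simps)
      then have "n \<in> segment (- y)" using n(1) x unfolding segment_def by (auto intro: divide_right_mono)
      then show ?thesis using x_eq by blast
    next
      assume x_eq: "x = - y + 2 * n * pi"
      then have "n = (x + y) / (2 * pi)" by (simp add: field_simps)
      then have "n \<in> segment y" using n(1) x unfolding segment_def by (auto intro: divide_right_mono)
      then show ?thesis using x_eq by blast
    qed
  qed
  moreover have "finite (segment c)" for c unfolding segment_def by (rule finite_int_segment)
  ultimately show ?thesis by (meson finite_Un finite_imageI finite_subset)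
qed

lemma finite_rotation_level_set:
  fixes a b c :: real
  assumes "a \<noteq> 0 \<or> b \<noteq> 0"
  shows "finite {\<theta> \<in> {\<alpha>..\<beta>}. cos \<theta> * a - sin \<theta> * b = c}"
proof -
  define r where "r = sqrt (a\<^sup>2 + b\<^sup>2)"
  have "0 < a\<^sup>2 + b\<^sup>2" using assms by (auto simp: sum_power2_gt_zero_iff)
  then have "0 < r" unfolding r_def by simp
  have "(a / r)\<^sup>2 + (b / r)\<^sup>2 = 1"
    using assms \<open>0 < a\<^sup>2 + b\<^sup>2\<close> unfolding r_def by (simp add: power_divide add_divide_distrib[symmetric])
  then obtain \<phi> where \<phi>: "a / r = cos \<phi>" "b / r = sin \<phi>" by (rule sincos_total_2pi) auto
  have polar: "cos \<theta> * a - sin \<theta> * b = r * cos (\<theta> + \<phi>)" for \<theta>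
    using \<phi> \<open>0 < r\<close> by (simp add: cos_add field_simps)
  have "{\<theta> \<in> {\<alpha>..\<beta>}. cos \<theta> * a - sin \<theta> * b = c} \<subseteq> (\<lambda>x. x - \<phi>) ` {x \<in> {\<alpha> + \<phi>..\<beta> + \<phi>}. cos x = c / r}"
  proof
    fix \<theta> assume "\<theta> \<in> {\<theta> \<in> {\<alpha>..\<beta>}. cos \<theta> * a - sin \<theta> * b = c}"
    then show "\<theta> \<in> (\<lambda>x. x - \<phi>) ` {x \<in> {\<alpha> + \<phi>..\<beta> + \<phi>}. cos x = c / r}"
      using polar \<open>0 < r\<close> by (intro image_eqI[of _ _ "\<theta> + \<phi>"]) (auto simp: field_simps)
  qed
  then show ?thesis by (rule finite_subset) (intro finite_imageI finite_cos_eq_in_interval)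
qed

lemma has_real_derivative_clamp:
  fixes l u x :: real
  assumes "x \<noteq> l" "x \<noteq> u"
  shows "((\<lambda>x. max l (min u x)) has_real_derivative indicator {l..u} x) (at x)"
proof -
  consider "x < l" | "u < x" | "l < x" "x < u" using assms by fastforce
  then show ?thesis
  proof cases
    case 1
    show ?thesis
    proof (rule has_field_derivative_transform_within_open[where S="{..<l}"])
      show "((\<lambda>_. l) has_real_derivative indicator {l..u} x) (at x)" using 1 by simp
    qed (use 1 in auto)
  next
    case 2
    show ?thesis
    proof (rule has_field_derivative_transform_within_open[where S="{u<..}"])
      show "((\<lambda>_. max l u) has_real_derivative indicator {l..u} x) (at x)" using 2 by simp
    qed (use 2 in auto)
  next
    case 3
    show ?thesis
    proof (rule has_field_derivative_transform_within_open[where S="{l<..<u}"])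
      show "((\<lambda>x. x) has_real_derivative indicator {l..u} x) (at x)" using 3 by simp
    qed (use 3 in auto)
  qed
qed

(* The integrand is the derivative of h(U) W along the rotation, h being the clamp to [l, u];
   it is smooth off the finitely many angles where U hits l or u, and h(U) W is 2 pi-periodic. *)
lemma has_integral_clamp_rotation:
  fixes a b l u :: real
  defines "U \<equiv> \<lambda>\<theta>. cos \<theta> * a - sin \<theta> * b" and "W \<equiv> \<lambda>\<theta>. sin \<theta> * a + cos \<theta> * b"
  shows "((\<lambda>\<theta>. max l (min u (U \<theta>)) * U \<theta> - indicator {l..u} (U \<theta>) * (W \<theta>)\<^sup>2) has_integral 0) {0..2 * pi}"
proof (cases "a = 0 \<and> b = 0")
  case True
  then show ?thesis unfolding U_def W_def by simp
next
  case False
  define H where "H \<theta> = max l (min u (U \<theta>)) * W \<theta>" for \<theta>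
  define E where "E = {\<theta> \<in> {0..2 * pi}. U \<theta> = l} \<union> {\<theta> \<in> {0..2 * pi}. U \<theta> = u}"
  have "finite E" unfolding E_def U_def using finite_rotation_level_set False by blast
  moreover have "(H has_vector_derivative
      max l (min u (U \<theta>)) * U \<theta> - indicator {l..u} (U \<theta>) * (W \<theta>)\<^sup>2) (at \<theta>)"
    if "\<theta> \<in> {0<..<2 * pi} - E" for \<theta>
  proof -
    have "U \<theta> \<noteq> l" "U \<theta> \<noteq> u" using that unfolding E_def by auto
    have "(U has_real_derivative - W \<theta>) (at \<theta>)" "(W has_real_derivative U \<theta>) (at \<theta>)"
      unfolding U_def W_def by (auto intro!: derivative_eq_intros)
    then have "(H has_real_derivative
        indicator {l..u} (U \<theta>) * - W \<theta> * W \<theta> + U \<theta> * max l (min u (U \<theta>))) (at \<theta>)"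
      unfolding H_def
      by (intro DERIV_mult DERIV_chain2[OF has_real_derivative_clamp]) (use \<open>U \<theta> \<noteq> l\<close> \<open>U \<theta> \<noteq> u\<close> in auto)
    then show ?thesis
      by (simp add: has_real_derivative_iff_has_vector_derivative power2_eq_square algebra_simps)
  qed
  moreover have "continuous_on {0..2 * pi} H"
    unfolding H_def U_def W_def by (intro continuous_intros)
  ultimately have "((\<lambda>\<theta>. max l (min u (U \<theta>)) * U \<theta> - indicator {l..u} (U \<theta>) * (W \<theta>)\<^sup>2)
      has_integral (H (2 * pi) - H 0)) {0..2 * pi}"
    by (intro fundamental_theorem_of_calculus_interior_strong) auto
  moreover have "H (2 * pi) = H 0" unfolding H_def U_def W_def by simp
  ultimately show ?thesis by simp
qed

lemma set_integrable_bounded_Icc: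
  fixes f :: "real \<Rightarrow> real"
  assumes "f \<in> borel_measurable borel" "\<And>x. \<bar>f x\<bar> \<le> K"
  shows "set_integrable lborel {a..b} f"
  unfolding set_integrable_def
  using assms by (intro integrableI_bounded_set[where A="{a..b}" and B=K])
    (auto simp: emeasure_lborel_Icc_eq split: split_indicator)

(* The integrand is P - F with F the integrand of has_integral_clamp_rotation, and P >= 0
   because max l (min u x) * x >= indicator {l..u} x * x^2 when l <= 0 <= u. *)
lemma rotation_average_nonneg:
  fixes a b l u :: real
  assumes "l \<le> 0" "0 \<le> u"
  defines "U \<equiv> \<lambda>\<theta>. cos \<theta> * a - sin \<theta> * b" and "W \<equiv> \<lambda>\<theta>. sin \<theta> * a + cos \<theta> * b"
  shows "0 \<le> (LINT \<theta>:{0..2 * pi}|lborel. indicator {l..u} (U \<theta>) * ((W \<theta>)\<^sup>2 - (U \<theta>)\<^sup>2))"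
proof -
  define F where "F \<theta> = max l (min u (U \<theta>)) * U \<theta> - indicator {l..u} (U \<theta>) * (W \<theta>)\<^sup>2" for \<theta>
  define P where "P \<theta> = max l (min u (U \<theta>)) * U \<theta> - indicator {l..u} (U \<theta>) * (U \<theta>)\<^sup>2" for \<theta>
  have P_nonneg: "P \<theta> \<ge> 0" for \<theta>
    using assms(1,2) unfolding P_def
    by (cases "U \<theta> < l"; cases "u < U \<theta>") (auto simp: mult_nonpos_nonpos power2_eq_square)
  have "(U \<theta>)\<^sup>2 + (W \<theta>)\<^sup>2 = a\<^sup>2 + b\<^sup>2" for \<theta>
    unfolding U_def W_def by (rule rotation_sum_squares)
  moreover have "\<bar>max l (min u x) * x - indicator {l..u} x * y\<^sup>2\<bar> \<le> x\<^sup>2 + y\<^sup>2" for x y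
  proof -
    have "\<bar>max l (min u x)\<bar> \<le> \<bar>x\<bar>" using assms(1,2) by auto
    then have "\<bar>max l (min u x)\<bar> * \<bar>x\<bar> \<le> \<bar>x\<bar> * \<bar>x\<bar>" by (rule mult_right_mono) simp
    then have "\<bar>max l (min u x) * x\<bar> \<le> x\<^sup>2" by (simp add: abs_mult power2_eq_square)
    moreover have "\<bar>indicator {l..u} x * y\<^sup>2\<bar> \<le> y\<^sup>2" by (simp split: split_indicator)
    ultimately show ?thesis
      using abs_triangle_ineq4[of "max l (min u x) * x" "indicator {l..u} x * y\<^sup>2"] by linarith
  qed
  ultimately have "\<bar>F \<theta>\<bar> \<le> 2 * (a\<^sup>2 + b\<^sup>2)" "\<bar>P \<theta>\<bar> \<le> 2 * (a\<^sup>2 + b\<^sup>2)" for \<theta>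
    unfolding F_def P_def by (smt (verit) zero_le_power2)+
  moreover have "F \<in> borel_measurable borel" "P \<in> borel_measurable borel"
    unfolding F_def P_def U_def W_def by measurable
  ultimately have integrable: "set_integrable lborel {0..2 * pi} F" "set_integrable lborel {0..2 * pi} P"
    by (auto intro: set_integrable_bounded_Icc)
  have "(F has_integral 0) {0..2 * pi}"
    unfolding F_def U_def W_def by (rule has_integral_clamp_rotation)
  then have "(LINT \<theta>:{0..2 * pi}|lborel. F \<theta>) = 0"
    using set_borel_integral_eq_integral(2)[OF integrable(1)] by (simp add: integral_unique)
  moreover have "(LINT \<theta>:{0..2 * pi}|lborel. P \<theta>) \<ge> 0"
    unfolding set_lebesgue_integral_def
    by (rule Bochner_Integration.integral_nonneg) (simp add: P_nonneg)
  moreover have "indicator {l..u} (U \<theta>) * ((W \<theta>)\<^sup>2 - (U \<theta>)\<^sup>2) = P \<theta> - F \<theta>" for \<theta>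
    unfolding P_def F_def by (simp add: algebra_simps)
  ultimately show ?thesis using integrable by (simp add: set_integral_diff)
qed

lemma nonneg_if_average_nonneg:
  fixes G :: "real \<Rightarrow> 'a \<Rightarrow> real"
  assumes "sigma_finite_measure M"
    and G_measurable[measurable]: "(\<lambda>(\<theta>, \<omega>). G \<theta> \<omega>) \<in> borel_measurable (lborel \<Otimes>\<^sub>M M)"
    and "integrable M K" and G_bounded: "\<And>\<theta> \<omega>. \<bar>G \<theta> \<omega>\<bar> \<le> K \<omega>"
    and average_constant: "\<And>\<theta>. \<theta> \<in> {a..b} \<Longrightarrow> (\<integral>\<omega>. G \<theta> \<omega> \<partial>M) = D"
    and average_nonneg: "\<And>\<omega>. \<omega> \<in> space M \<Longrightarrow> 0 \<le> (LINT \<theta>:{a..b}|lborel. G \<theta> \<omega>)"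
    and "a < b"
  shows "0 \<le> D"
proof -
  interpret pair_sigma_finite lborel M
    using assms(1) by (simp add: pair_sigma_finite_def lborel.sigma_finite_measure_axioms)
  define F where "F \<theta> \<omega> = indicator {a..b} \<theta> * G \<theta> \<omega>" for \<theta> \<omega>
  have integrable_G: "integrable M (G \<theta>)" for \<theta>
  proof (rule Bochner_Integration.integrable_bound[OF \<open>integrable M K\<close>])
    show "G \<theta> \<in> borel_measurable M" by measurable
    show "AE \<omega> in M. norm (G \<theta> \<omega>) \<le> norm (K \<omega>)"
      by (intro AE_I2) (simp add: order_trans[OF G_bounded abs_ge_self])
  qed
  have "set_integrable lborel {a..b} (\<lambda>\<theta>. \<integral>\<omega>. norm (G \<theta> \<omega>) \<partial>M)"
  proof (rule set_integrable_bounded_Icc)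
    show "\<bar>\<integral>\<omega>. norm (G \<theta> \<omega>) \<partial>M\<bar> \<le> (\<integral>\<omega>. K \<omega> \<partial>M)" for \<theta>
      using integrable_G \<open>integrable M K\<close> G_bounded by (simp add: integral_mono)
  qed (rule sigma_finite_measure.borel_measurable_lebesgue_integral[OF assms(1)], measurable)
  then have "integrable (lborel \<Otimes>\<^sub>M M) (\<lambda>(\<theta>, \<omega>). F \<theta> \<omega>)"
    using integrable_G unfolding F_def set_integrable_def
    by (intro Fubini_integrable) (auto simp: abs_mult)
  have "0 \<le> (\<integral>\<omega>. (\<integral>\<theta>. F \<theta> \<omega> \<partial>lborel) \<partial>M)"
  proof (rule Bochner_Integration.integral_nonneg)
    fix \<omega> assume "\<omega> \<in> space M"
    then show "0 \<le> (\<integral>\<theta>. F \<theta> \<omega> \<partial>lborel)"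
      using average_nonneg unfolding F_def set_lebesgue_integral_def by simp
  qed
  also have "\<dots> = (\<integral>\<theta>. (\<integral>\<omega>. F \<theta> \<omega> \<partial>M) \<partial>lborel)"
    by (rule Fubini_integral) fact
  also have "\<dots> = (\<integral>\<theta>. indicator {a..b} \<theta> * D \<partial>lborel)"
    unfolding F_def by (intro Bochner_Integration.integral_cong) (auto simp: average_constant split: split_indicator)
  also have "\<dots> = (b - a) * D" using \<open>a < b\<close> by simp
  finally show ?thesis using \<open>a < b\<close> by (simp add: zero_le_mult_iff)
qed

lemma integrable_indicator_mult_bounded:
  fixes f :: "'a \<Rightarrow> real"
  assumes "integrable M K" and [measurable]: "V \<in> borel_measurable M" "S \<in> sets borel" "f \<in> borel_measurable M"
    and "\<And>\<omega>. \<bar>f \<omega>\<bar> \<le> K \<omega>"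
  shows "integrable M (\<lambda>\<omega>. indicator S (V \<omega>) * f \<omega>)"
proof (rule Bochner_Integration.integrable_bound[OF assms(1)])
  show "AE \<omega> in M. norm (indicator S (V \<omega>) * f \<omega>) \<le> norm (K \<omega>)"
    using assms(5) by (intro AE_I2) (auto split: split_indicator intro: order_trans[OF _ abs_ge_self])
qed measurable

theorem truncated_second_moment_le_if_rotation_invariant:
  fixes U W :: "'a \<Rightarrow> real" and \<psi> :: "real \<Rightarrow> complex"
  assumes M: "prob_space M" and [measurable]: "U \<in> borel_measurable M" "W \<in> borel_measurable M"
    and "integrable M (\<lambda>\<omega>. (U \<omega>)\<^sup>2)" "integrable M (\<lambda>\<omega>. (W \<omega>)\<^sup>2)"
    and rotation_invariant: "\<And>s t. joint_char M U W s t = \<psi> (s\<^sup>2 + t\<^sup>2)"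
    and "l \<le> 0" "0 \<le> u"
  shows "(\<integral>\<omega>. indicator {l..u} (U \<omega>) * (U \<omega>)\<^sup>2 \<partial>M) \<le> (\<integral>\<omega>. indicator {l..u} (U \<omega>) * (W \<omega>)\<^sup>2 \<partial>M)"
proof -
  interpret prob_space M by fact
  define U\<^sub>\<theta> where "U\<^sub>\<theta> \<theta> \<omega> = cos \<theta> * U \<omega> - sin \<theta> * W \<omega>" for \<theta> \<omega>
  define W\<^sub>\<theta> where "W\<^sub>\<theta> \<theta> \<omega> = sin \<theta> * U \<omega> + cos \<theta> * W \<omega>" for \<theta> \<omega>
  define G where "G \<theta> \<omega> = indicator {l..u} (U\<^sub>\<theta> \<theta> \<omega>) * ((W\<^sub>\<theta> \<theta> \<omega>)\<^sup>2 - (U\<^sub>\<theta> \<theta> \<omega>)\<^sup>2)" for \<theta> \<omega>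
  have [measurable]: "U\<^sub>\<theta> \<theta> \<in> borel_measurable M" "W\<^sub>\<theta> \<theta> \<in> borel_measurable M" for \<theta>
    unfolding U\<^sub>\<theta>_def W\<^sub>\<theta>_def by measurable
  have rotated_bounds: "(U\<^sub>\<theta> \<theta> \<omega>)\<^sup>2 \<le> (U \<omega>)\<^sup>2 + (W \<omega>)\<^sup>2" "(W\<^sub>\<theta> \<theta> \<omega>)\<^sup>2 \<le> (U \<omega>)\<^sup>2 + (W \<omega>)\<^sup>2"
    for \<theta> \<omega>
    using rotation_sum_squares[of \<theta> "U \<omega>" "W \<omega>"] unfolding U\<^sub>\<theta>_def W\<^sub>\<theta>_def
    by (metis le_add_same_cancel1 le_add_same_cancel2 zero_le_power2)+
  note invariant = truncated_moments_rotation_invariant[OF M _ _ rotation_invariant, of "{l..u}",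
      folded U\<^sub>\<theta>_def W\<^sub>\<theta>_def]
  have "integrable M (\<lambda>\<omega>. (U \<omega>)\<^sup>2 + (W \<omega>)\<^sup>2)" using assms(4,5) by simp
  note integrable_bound = integrable_indicator_mult_bounded[OF this]
  define D where "D = (\<integral>\<omega>. indicator {l..u} (U \<omega>) * ((W \<omega>)\<^sup>2 - (U \<omega>)\<^sup>2) \<partial>M)"
  (* By rotation invariance E[G theta] = D for every theta, while for every sample point the
     average of G over theta is nonnegative. *)
  have "0 \<le> D"
  proof (rule nonneg_if_average_nonneg[where G=G and K="\<lambda>\<omega>. (U \<omega>)\<^sup>2 + (W \<omega>)\<^sup>2" and a=0 and b="2 * pi"])
    show "sigma_finite_measure M" by (rule prob_space_imp_sigma_finite[OF M])
    show "(\<lambda>(\<theta>, \<omega>). G \<theta> \<omega>) \<in> borel_measurable (lborel \<Otimes>\<^sub>M M)"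
      unfolding G_def U\<^sub>\<theta>_def W\<^sub>\<theta>_def by measurable
    show "integrable M (\<lambda>\<omega>. (U \<omega>)\<^sup>2 + (W \<omega>)\<^sup>2)" by fact
    show "\<bar>G \<theta> \<omega>\<bar> \<le> (U \<omega>)\<^sup>2 + (W \<omega>)\<^sup>2" for \<theta> \<omega>
    proof -
      have "\<bar>(W\<^sub>\<theta> \<theta> \<omega>)\<^sup>2 - (U\<^sub>\<theta> \<theta> \<omega>)\<^sup>2\<bar> \<le> (U \<omega>)\<^sup>2 + (W \<omega>)\<^sup>2"
        unfolding abs_le_iff
        using rotated_bounds[of \<theta> \<omega>] zero_le_power2[of "U\<^sub>\<theta> \<theta> \<omega>"] zero_le_power2[of "W\<^sub>\<theta> \<theta> \<omega>"]
        by (intro conjI) linarith+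
      then show ?thesis unfolding G_def by (simp split: split_indicator)
    qed
    show "(\<integral>\<omega>. G \<theta> \<omega> \<partial>M) = D" for \<theta>
      unfolding G_def D_def right_diff_distrib
      using invariant
      by (subst (1 2) Bochner_Integration.integral_diff) (auto intro!: integrable_bound rotated_bounds)
    show "0 \<le> (LINT \<theta>:{0..2 * pi}|lborel. G \<theta> \<omega>)" for \<omega>
      unfolding G_def U\<^sub>\<theta>_def W\<^sub>\<theta>_def by (rule rotation_average_nonneg) fact+
  qed simp
  then show ?thesis
    unfolding D_def right_diff_distrib
    using integrable_bound[of U "{l..u}" "\<lambda>\<omega>. (U \<omega>)\<^sup>2"] integrable_bound[of U "{l..u}" "\<lambda>\<omega>. (W \<omega>)\<^sup>2"]
    by (simp add: Bochner_Integration.integral_diff)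
qed

section \<open>Quantiles\<close>

lemma measure_le_eq_distr:
  fixes Z :: "'a \<Rightarrow> real"
  assumes "Z \<in> borel_measurable M"
  shows "measure M {\<omega> \<in> space M. Z \<omega> \<le> x} = measure (distr M borel Z) {..x}"
  using assms by (subst measure_distr) (auto intro!: arg_cong[where f="measure M"])

lemma quantile_eq_if_distr_eq:
  fixes Z Z' :: "'a \<Rightarrow> real"
  assumes "Z \<in> borel_measurable M" "Z' \<in> borel_measurable M" "distr M borel Z = distr M borel Z'"
  shows "quantile M Z p = quantile M Z' p"
  unfolding quantile_def using assms by (simp add: measure_le_eq_distr)

lemma quantile_set_nonempty_bdd_below:
  fixes Z :: "'a \<Rightarrow> real"
  assumes "prob_space M" and [measurable]: "Z \<in> borel_measurable M" and "0 < p" "p < 1"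
  shows "{x. p \<le> measure M {\<omega> \<in> space M. Z \<omega> \<le> x}} \<noteq> {}"
    and "bdd_below {x. p \<le> measure M {\<omega> \<in> space M. Z \<omega> \<le> x}}"
proof -
  interpret real_distribution "distr M borel Z"
    using assms(1) by (simp add: prob_space.real_distribution_distr)
  have cdf: "cdf (distr M borel Z) x = measure M {\<omega> \<in> space M. Z \<omega> \<le> x}" for x
    unfolding cdf_def by (simp add: measure_le_eq_distr)
  have "eventually (\<lambda>x. p < cdf (distr M borel Z) x) at_top"
    by (rule order_tendstoD(1)[OF cdf_lim_at_top_prob \<open>p < 1\<close>])
  then obtain x where "p < cdf (distr M borel Z) x" by (auto simp: eventually_at_top_linorder)
  then show "{x. p \<le> measure M {\<omega> \<in> space M. Z \<omega> \<le> x}} \<noteq> {}" using cdf by (auto intro: less_imp_le)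
  have "eventually (\<lambda>x. cdf (distr M borel Z) x < p) at_bot"
    by (rule order_tendstoD(2)[OF cdf_lim_at_bot \<open>0 < p\<close>])
  then obtain b where "\<And>x. x \<le> b \<Longrightarrow> cdf (distr M borel Z) x < p"
    by (auto simp: eventually_at_bot_linorder)
  then show "bdd_below {x. p \<le> measure M {\<omega> \<in> space M. Z \<omega> \<le> x}}"
    unfolding bdd_below_def cdf[symmetric] by (metis linorder_not_le mem_Collect_eq nle_le)
qed

lemma quantile_affine:
  fixes Z :: "'a \<Rightarrow> real"
  assumes "prob_space M" "Z \<in> borel_measurable M" "0 < p" "p < 1" "0 < s"
  shows "quantile M (\<lambda>\<omega>. c + s * Z \<omega>) p = c + s * quantile M Z p"
proof -
  let ?S = "{x. p \<le> measure M {\<omega> \<in> space M. Z \<omega> \<le> x}}"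
  have "{\<omega> \<in> space M. c + s * Z \<omega> \<le> x} = {\<omega> \<in> space M. Z \<omega> \<le> (x - c) / s}" for x
    using \<open>0 < s\<close> by (auto simp: pos_le_divide_eq algebra_simps)
  then have "{x. p \<le> measure M {\<omega> \<in> space M. c + s * Z \<omega> \<le> x}} = (\<lambda>y. c + s * y) ` ?S"
    using \<open>0 < s\<close> by (auto intro!: image_eqI[where x="(_ - c) / s"])
  moreover have "c + s * Inf ?S = Inf ((\<lambda>y. c + s * y) ` ?S)"
    using quantile_set_nonempty_bdd_below[OF assms(1-4)] \<open>0 < s\<close>
    by (intro continuous_at_Inf_mono) (auto intro!: monoI continuous_intros)
  ultimately show ?thesis unfolding quantile_def by simp
qed

lemma quantile_symmetric:
  fixes Z :: "'a \<Rightarrow> real"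
  assumes "prob_space M" and [measurable]: "Z \<in> borel_measurable M"
    and symmetric: "distr M borel Z = distr M borel (\<lambda>\<omega>. - Z \<omega>)" and "0 < p" "p < 1 / 2"
  shows "quantile M Z p \<le> 0" and "0 \<le> quantile M Z (1 - p)"
proof -
  interpret prob_space M by fact
  have reflect: "measure M {\<omega> \<in> space M. Z \<omega> \<in> S} = measure M {\<omega> \<in> space M. - Z \<omega> \<in> S}"
    if "S \<in> sets borel" for S
    using arg_cong[OF symmetric, of "\<lambda>N. measure N S"] that by (simp add: measure_distr vimage_def Int_def conj_commute)
  have "{\<omega> \<in> space M. 0 \<le> Z \<omega>} = space M - {\<omega> \<in> space M. Z \<omega> < 0}" by auto
  then have "measure M {\<omega> \<in> space M. Z \<omega> < 0} + measure M {\<omega> \<in> space M. 0 \<le> Z \<omega>} = 1"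
    using prob_compl[of "{\<omega> \<in> space M. Z \<omega> < 0}"] by simp
  moreover have "measure M {\<omega> \<in> space M. 0 \<le> Z \<omega>} = measure M {\<omega> \<in> space M. Z \<omega> \<le> 0}"
    using reflect[of "{..0}"] by simp
  moreover have "measure M {\<omega> \<in> space M. Z \<omega> < 0} = measure M {\<omega> \<in> space M. 0 < Z \<omega>}"
    using reflect[of "{..<0}"] by simp
  moreover have "measure M {\<omega> \<in> space M. Z \<omega> < 0} \<le> measure M {\<omega> \<in> space M. Z \<omega> \<le> 0}"
    "measure M {\<omega> \<in> space M. 0 < Z \<omega>} \<le> measure M {\<omega> \<in> space M. 0 \<le> Z \<omega>}"
    by (auto intro!: finite_measure_mono)
  ultimately have le_0: "1 / 2 \<le> measure M {\<omega> \<in> space M. Z \<omega> \<le> 0}"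
    and less_0: "measure M {\<omega> \<in> space M. Z \<omega> < 0} \<le> 1 / 2"
    by linarith+
  show "quantile M Z p \<le> 0"
    unfolding quantile_def using le_0 \<open>p < 1 / 2\<close> quantile_set_nonempty_bdd_below(2)[OF assms(1,2), of p] \<open>0 < p\<close>
    by (intro cInf_lower) auto
  show "0 \<le> quantile M Z (1 - p)"
    unfolding quantile_def
  proof (rule cInf_greatest)
    show "{x. 1 - p \<le> measure M {\<omega> \<in> space M. Z \<omega> \<le> x}} \<noteq> {}"
      using quantile_set_nonempty_bdd_below(1)[OF assms(1,2)] \<open>0 < p\<close> \<open>p < 1 / 2\<close> by simp
    fix x assume "x \<in> {x. 1 - p \<le> measure M {\<omega> \<in> space M. Z \<omega> \<le> x}}"
    moreover have "measure M {\<omega> \<in> space M. Z \<omega> \<le> x} \<le> measure M {\<omega> \<in> space M. Z \<omega> < 0}" if "x < 0"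
      using that by (intro finite_measure_mono) auto
    ultimately show "0 \<le> x" using less_0 \<open>p < 1 / 2\<close> by force
  qed
qed

lemma central_interval_affine_event:
  fixes Z :: "'a \<Rightarrow> real"
  assumes "prob_space M" "Z \<in> borel_measurable M" "0 < \<alpha>" "\<alpha> < 1" "0 < s"
  shows "{\<omega> \<in> space M. c + s * Z \<omega> \<in> central_interval M (\<lambda>\<omega>. c + s * Z \<omega>) \<alpha>}
    = {\<omega> \<in> space M. Z \<omega> \<in> central_interval M Z \<alpha>}"
  using assms quantile_affine[OF assms(1,2) _ _ \<open>0 < s\<close>, of "\<alpha> / 2" c]
    quantile_affine[OF assms(1,2) _ _ \<open>0 < s\<close>, of "1 - \<alpha> / 2" c]
  unfolding central_interval_def by auto

section \<open>Conditional moments\<close>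

lemma cond_mean_preimage:
  fixes V :: "'a \<Rightarrow> real"
  assumes "prob_space M" and [measurable]: "V \<in> borel_measurable M" "I \<in> sets borel"
  shows "cond_mean M {\<omega> \<in> space M. V \<omega> \<in> I} f
    = (\<integral>\<omega>. indicator I (V \<omega>) * f \<omega> \<partial>M) / (\<integral>\<omega>. indicator I (V \<omega>) \<partial>M)"
proof -
  interpret prob_space M by fact
  have indicator_eq: "indicator {\<omega> \<in> space M. V \<omega> \<in> I} \<omega> = (indicator I (V \<omega>) :: real)" if "\<omega> \<in> space M" for \<omega>
    using that by (simp split: split_indicator)
  have "(\<integral>\<omega>. (indicator I (V \<omega>) :: real) \<partial>M) = (\<integral>\<omega>. indicator {\<omega> \<in> space M. V \<omega> \<in> I} \<omega> \<partial>M)"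
    by (intro Bochner_Integration.integral_cong) (simp_all add: indicator_eq)
  also have "\<dots> = measure M {\<omega> \<in> space M. V \<omega> \<in> I}"
    by (simp add: Int_absorb2 Collect_restrict)
  finally show ?thesis
    unfolding cond_mean_def
    by (simp add: indicator_eq cong: Bochner_Integration.integral_cong)
qed

lemma cond_mean_eq_if_joint_char_eq:
  fixes A B A' B' :: "'a \<Rightarrow> real"
  assumes M: "prob_space M"
    and [measurable]: "A \<in> borel_measurable M" "B \<in> borel_measurable M"
      "A' \<in> borel_measurable M" "B' \<in> borel_measurable M" "I \<in> sets borel" "f \<in> borel_measurable borel"
    and "joint_char M A B = joint_char M A' B'"
  shows "cond_mean M {\<omega> \<in> space M. A \<omega> \<in> I} (\<lambda>\<omega>. f (B \<omega>))
    = cond_mean M {\<omega> \<in> space M. A' \<omega> \<in> I} (\<lambda>\<omega>. f (B' \<omega>))"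
  using integral_indicator_mult_eq_if_joint_char_eq[OF M M, of A B A' B' I f]
    integral_indicator_mult_eq_if_joint_char_eq[OF M M, of A B A' B' I "\<lambda>_. 1"] assms
  by (simp add: cond_mean_preimage[OF M])

lemma cond_mean_uminus: "cond_mean M A (\<lambda>\<omega>. - f \<omega>) = - cond_mean M A f"
  unfolding cond_mean_def by simp

lemma cond_mean_affine:
  assumes "prob_space M" "A \<in> sets M" "measure M A \<noteq> 0" "integrable M Z"
  shows "cond_mean M A (\<lambda>\<omega>. c + s * Z \<omega>) = c + s * cond_mean M A Z"
proof -
  interpret prob_space M by fact
  have integrable: "integrable M (\<lambda>\<omega>. indicator A \<omega> * Z \<omega>)"
    using assms(2,4) by (simp add: integrable_real_mult_indicator mult.commute)
  have "(\<integral>\<omega>. indicator A \<omega> * (c + s * Z \<omega>) \<partial>M)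
      = (\<integral>\<omega>. c * indicator A \<omega> + s * (indicator A \<omega> * Z \<omega>) \<partial>M)"
    by (simp add: algebra_simps)
  also have "\<dots> = (\<integral>\<omega>. c * indicator A \<omega> \<partial>M) + (\<integral>\<omega>. s * (indicator A \<omega> * Z \<omega>) \<partial>M)"
    using assms(2) integrable by (intro Bochner_Integration.integral_add) (auto simp: less_top[symmetric])
  also have "\<dots> = c * measure M A + s * (\<integral>\<omega>. indicator A \<omega> * Z \<omega> \<partial>M)"
    using assms(2) by simp
  finally show ?thesis using assms(3) unfolding cond_mean_def by (simp add: field_simps)
qed

definition cond_var :: "'a measure \<Rightarrow> 'a set \<Rightarrow> ('a \<Rightarrow> real) \<Rightarrow> real" where
  "cond_var M A Z = cond_mean M A (\<lambda>\<omega>. (Z \<omega> - cond_mean M A Z) * (Z \<omega> - cond_mean M A Z))"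

lemma cond_cov_diag: "cond_cov M A Y $ k $ k = cond_var M A (\<lambda>\<omega>. Y \<omega> $ k)"
  by (simp add: cond_cov_def cond_var_def)

lemma cond_var_affine:
  assumes "prob_space M" "A \<in> sets M" "integrable M Z"
  shows "cond_var M A (\<lambda>\<omega>. c + s * Z \<omega>) = s\<^sup>2 * cond_var M A Z"
proof (cases "measure M A = 0")
  case True
  then show ?thesis by (simp add: cond_var_def cond_mean_def)
next
  case False
  have "(c + s * Z \<omega> - cond_mean M A (\<lambda>\<omega>. c + s * Z \<omega>)) * (c + s * Z \<omega> - cond_mean M A (\<lambda>\<omega>. c + s * Z \<omega>))
      = s\<^sup>2 * ((Z \<omega> - cond_mean M A Z) * (Z \<omega> - cond_mean M A Z))" for \<omega>
    using cond_mean_affine[OF assms(1,2) False assms(3)] by (simp add: power2_eq_square algebra_simps)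
  then show ?thesis
    unfolding cond_var_def by (simp add: cond_mean_def mult.left_commute[of "indicator A _"])
qed

lemma cond_var_eq_second_moment:
  assumes "prob_space M" "A \<in> sets M" "Z \<in> borel_measurable M" "integrable M (\<lambda>\<omega>. (Z \<omega>)\<^sup>2)"
  shows "cond_var M A Z = cond_mean M A (\<lambda>\<omega>. (Z \<omega>)\<^sup>2) - (cond_mean M A Z)\<^sup>2"
proof (cases "measure M A = 0")
  case True
  then show ?thesis by (simp add: cond_var_def cond_mean_def)
next
  case False
  interpret prob_space M by fact
  define m where "m = cond_mean M A Z"
  have "integrable M Z" using assms(3,4) by (rule square_integrable_imp_integrable)
  have integrable: "integrable M (\<lambda>\<omega>. indicator A \<omega> * Z \<omega>)" "integrable M (\<lambda>\<omega>. indicator A \<omega> * (Z \<omega>)\<^sup>2)"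
    "integrable M (indicator A :: 'a \<Rightarrow> real)"
    using integrable_real_mult_indicator[OF assms(2) \<open>integrable M Z\<close>]
      integrable_real_mult_indicator[OF assms(2,4)] assms(2)
    by (simp_all add: mult.commute less_top[symmetric])
  have "(\<integral>\<omega>. indicator A \<omega> * ((Z \<omega> - m) * (Z \<omega> - m)) \<partial>M)
      = (\<integral>\<omega>. indicator A \<omega> * (Z \<omega>)\<^sup>2 - 2 * m * (indicator A \<omega> * Z \<omega>) + m\<^sup>2 * indicator A \<omega> \<partial>M)"
    by (simp add: power2_eq_square algebra_simps)
  also have "\<dots> = (\<integral>\<omega>. indicator A \<omega> * (Z \<omega>)\<^sup>2 \<partial>M) - 2 * m * (\<integral>\<omega>. indicator A \<omega> * Z \<omega> \<partial>M) + m\<^sup>2 * measure M A"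
    using integrable assms(2) by simp
  finally show ?thesis
    using False unfolding cond_var_def m_def cond_mean_def by (simp add: field_simps power2_eq_square)
qed

lemma trace_cond_cov_affine:
  fixes Y Z :: "'a \<Rightarrow> real^'n"
  assumes "prob_space M" "A \<in> sets M" "\<And>k. integrable M (\<lambda>\<omega>. Z \<omega> $ k)"
    and "\<And>\<omega> k. Y \<omega> $ k = \<nu> $ k + \<sigma> k * Z \<omega> $ k"
  shows "trace (cond_cov M A Y) = (\<Sum>k\<in>UNIV. (\<sigma> k)\<^sup>2 * cond_var M A (\<lambda>\<omega>. Z \<omega> $ k))"
  unfolding trace_def cond_cov_diag assms(4) using cond_var_affine[OF assms(1,2,3)] by simp

lemma sum_select_le:
  fixes x :: "'n::finite \<Rightarrow> real"
  assumes "b \<le> a" "x j \<le> x i"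
  shows "(\<Sum>k\<in>UNIV. x k * (if k = i then b else a)) \<le> (\<Sum>k\<in>UNIV. x k * (if k = j then b else a))"
proof -
  have select: "(\<Sum>k\<in>UNIV. x k * (if k = m then b else a)) = a * sum x UNIV + x m * (b - a)" for m
  proof -
    have "(\<Sum>k\<in>UNIV. x k * (if k = m then b else a)) = (\<Sum>k\<in>UNIV. a * x k + (if k = m then x k * (b - a) else 0))"
      by (intro sum.cong) (auto simp: algebra_simps)
    then show ?thesis by (simp add: sum.distrib sum_distrib_left)
  qed
  have "x i * (b - a) \<le> x j * (b - a)" using assms by (intro mult_right_mono_neg) auto
  then show ?thesis unfolding select by simp
qed

section \<open>Spherical vectors\<close>

lemma borel_measurable_vec_nth[measurable (raw)]:
  fixes f :: "'a \<Rightarrow> real^'n"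
  shows "f \<in> borel_measurable M \<Longrightarrow> (\<lambda>\<omega>. f \<omega> $ i) \<in> borel_measurable M"
  using measurable_compose[OF _ borel_measurable_nth] .

locale spherical_vector = prob_space M for M :: "'a measure" +
  fixes Z :: "'a \<Rightarrow> real^'d" and \<psi> :: "real \<Rightarrow> complex"
  assumes measurable_Z: "Z \<in> borel_measurable M"
    and square_integrable_component: "\<And>k. integrable M (\<lambda>\<omega>. (Z \<omega> $ k)\<^sup>2)"
    and char_spherical: "\<And>w. (\<integral>\<omega>. iexp (w \<bullet> Z \<omega>) \<partial>M) = \<psi> (w \<bullet> w)"
begin

lemma measurable_component[measurable]: "(\<lambda>\<omega>. Z \<omega> $ k) \<in> borel_measurable M"
  by (rule borel_measurable_vec_nth[OF measurable_Z])

lemma joint_char_components: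
  assumes "i \<noteq> k"
  shows "joint_char M (\<lambda>\<omega>. Z \<omega> $ i) (\<lambda>\<omega>. Z \<omega> $ k) s t = \<psi> (s\<^sup>2 + t\<^sup>2)"
proof -
  have "(axis i s + axis k t) \<bullet> Z \<omega> = s * Z \<omega> $ i + t * Z \<omega> $ k" for \<omega>
    by (simp add: inner_add_left inner_axis')
  moreover have "(axis i s + axis k t) \<bullet> (axis i s + axis k t) = s\<^sup>2 + t\<^sup>2"
    using assms by (simp add: inner_add_left inner_add_right inner_axis_axis power2_eq_square)
  ultimately show ?thesis
    using char_spherical[of "axis i s + axis k t"] unfolding joint_char_def by simp
qed

lemma char_component: "(\<integral>\<omega>. iexp (t * Z \<omega> $ i) \<partial>M) = \<psi> (t\<^sup>2)"
  using char_spherical[of "axis i t"]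
  by (simp add: inner_axis' inner_axis_axis power2_eq_square)

lemma joint_char_component_diagonal:
  "joint_char M (\<lambda>\<omega>. Z \<omega> $ i) (\<lambda>\<omega>. Z \<omega> $ i) s t = \<psi> ((s + t)\<^sup>2)"
  using char_component[of "s + t" i] by (simp add: joint_char_def distrib_right)

lemma distr_component_eq: "distr M borel (\<lambda>\<omega>. Z \<omega> $ i) = distr M borel (\<lambda>\<omega>. Z \<omega> $ j)"
  by (rule distr_eq_if_char_eq[OF prob_space_axioms measurable_component measurable_component])
    (simp only: char_component)

lemma distr_component_symmetric: "distr M borel (\<lambda>\<omega>. Z \<omega> $ i) = distr M borel (\<lambda>\<omega>. - Z \<omega> $ i)"
proof (rule distr_eq_if_char_eq[OF prob_space_axioms measurable_component])
  fix t
  have "(\<integral>\<omega>. iexp (t * - Z \<omega> $ i) \<partial>M) = (\<integral>\<omega>. iexp ((- t) * Z \<omega> $ i) \<partial>M)" by simp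
  then show "(\<integral>\<omega>. iexp (t * Z \<omega> $ i) \<partial>M) = (\<integral>\<omega>. iexp (t * - Z \<omega> $ i) \<partial>M)"
    by (simp only: char_component power2_minus)
qed measurable

abbreviation component_event :: "'d \<Rightarrow> real set \<Rightarrow> 'a set" where
  "component_event i I \<equiv> {\<omega> \<in> space M. Z \<omega> $ i \<in> I}"

lemma component_event_sets:
  assumes [measurable]: "I \<in> sets borel"
  shows "component_event i I \<in> sets M"
  by measurable

lemma central_interval_component_eq:
  "central_interval M (\<lambda>\<omega>. Z \<omega> $ i) \<alpha> = central_interval M (\<lambda>\<omega>. Z \<omega> $ j) \<alpha>"
  unfolding central_interval_def
  by (simp add: quantile_eq_if_distr_eq[OF measurable_component measurable_component distr_component_eq])

lemma central_interval_component:
  assumes "0 < \<alpha>" "\<alpha> < 1"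
  obtains l u where "l \<le> 0" "0 \<le> u" "central_interval M (\<lambda>\<omega>. Z \<omega> $ i) \<alpha> = {l..u}"
proof
  show "quantile M (\<lambda>\<omega>. Z \<omega> $ i) (\<alpha> / 2) \<le> 0" "0 \<le> quantile M (\<lambda>\<omega>. Z \<omega> $ i) (1 - \<alpha> / 2)"
    using assms by (auto intro: quantile_symmetric[OF prob_space_axioms measurable_component distr_component_symmetric])
qed (simp add: central_interval_def)

lemma cond_mean_off_diag:
  assumes "i \<noteq> k" "I \<in> sets borel"
  shows "cond_mean M (component_event i I) (\<lambda>\<omega>. Z \<omega> $ k) = 0"
proof -
  have "cond_mean M (component_event i I) (\<lambda>\<omega>. id (Z \<omega> $ k))
      = cond_mean M (component_event i I) (\<lambda>\<omega>. id (- Z \<omega> $ k))"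
    using joint_char_components[OF assms(1)] assms(2)
    by (intro cond_mean_eq_if_joint_char_eq[OF prob_space_axioms]) (simp_all add: fun_eq_iff joint_char_uminus_right)
  then show ?thesis by (simp add: cond_mean_uminus)
qed

lemma cond_var_off_diag_eq:
  assumes "i \<noteq> k" "i' \<noteq> k'" "I \<in> sets borel"
  shows "cond_var M (component_event i I) (\<lambda>\<omega>. Z \<omega> $ k) = cond_var M (component_event i' I) (\<lambda>\<omega>. Z \<omega> $ k')"
proof -
  have "cond_mean M (component_event i I) (\<lambda>\<omega>. (Z \<omega> $ k)\<^sup>2) = cond_mean M (component_event i' I) (\<lambda>\<omega>. (Z \<omega> $ k')\<^sup>2)"
    using joint_char_components[OF assms(1)] joint_char_components[OF assms(2)] assms(3)
    by (intro cond_mean_eq_if_joint_char_eq[OF prob_space_axioms, where f="\<lambda>y. y\<^sup>2"]) (simp_all add: fun_eq_iff)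
  then show ?thesis
    using assms square_integrable_component
    by (simp add: cond_var_eq_second_moment[OF prob_space_axioms component_event_sets] cond_mean_off_diag)
qed

lemma cond_var_diag_eq:
  assumes "I \<in> sets borel"
  shows "cond_var M (component_event i I) (\<lambda>\<omega>. Z \<omega> $ i) = cond_var M (component_event j I) (\<lambda>\<omega>. Z \<omega> $ j)"
proof -
  have "cond_mean M (component_event i I) (\<lambda>\<omega>. f (Z \<omega> $ i)) = cond_mean M (component_event j I) (\<lambda>\<omega>. f (Z \<omega> $ j))"
    if "f \<in> borel_measurable borel" for f
    using assms that
    by (intro cond_mean_eq_if_joint_char_eq[OF prob_space_axioms]) (simp_all add: fun_eq_iff joint_char_component_diagonal)
  from this[of id] this[of "\<lambda>y. y\<^sup>2"] show ?thesis
    using assms square_integrable_component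
    by (simp add: cond_var_eq_second_moment[OF prob_space_axioms component_event_sets])
qed

lemma cond_var_diag_le_off_diag:
  assumes "i \<noteq> k" "l \<le> 0" "0 \<le> u"
  shows "cond_var M (component_event i {l..u}) (\<lambda>\<omega>. Z \<omega> $ i)
    \<le> cond_var M (component_event i {l..u}) (\<lambda>\<omega>. Z \<omega> $ k)"
proof -
  let ?A = "component_event i {l..u}"
  have "(\<integral>\<omega>. indicator {l..u} (Z \<omega> $ i) * (Z \<omega> $ i)\<^sup>2 \<partial>M) \<le> (\<integral>\<omega>. indicator {l..u} (Z \<omega> $ i) * (Z \<omega> $ k)\<^sup>2 \<partial>M)"
    using joint_char_components[OF assms(1)] assms(2,3)
    by (intro truncated_second_moment_le_if_rotation_invariant[OF prob_space_axioms]
        square_integrable_component) simp_all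
  moreover have "cond_mean M ?A f = (\<integral>\<omega>. indicator {l..u} (Z \<omega> $ i) * f \<omega> \<partial>M) / (\<integral>\<omega>. indicator {l..u} (Z \<omega> $ i) \<partial>M)"
    for f by (rule cond_mean_preimage[OF prob_space_axioms measurable_component]) simp
  moreover have "0 \<le> (\<integral>\<omega>. (indicator {l..u} (Z \<omega> $ i) :: real) \<partial>M)" by simp
  ultimately have second_moment_le: "cond_mean M ?A (\<lambda>\<omega>. (Z \<omega> $ i)\<^sup>2) \<le> cond_mean M ?A (\<lambda>\<omega>. (Z \<omega> $ k)\<^sup>2)"
    by (simp add: divide_right_mono)
  have var_eq: "cond_var M ?A (\<lambda>\<omega>. Z \<omega> $ m)
      = cond_mean M ?A (\<lambda>\<omega>. (Z \<omega> $ m)\<^sup>2) - (cond_mean M ?A (\<lambda>\<omega>. Z \<omega> $ m))\<^sup>2" for m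
    by (rule cond_var_eq_second_moment[OF prob_space_axioms component_event_sets]) (simp_all add: square_integrable_component)
  have mean_zero: "cond_mean M ?A (\<lambda>\<omega>. Z \<omega> $ k) = 0"
    using assms(1) by (rule cond_mean_off_diag) simp
  have "cond_var M ?A (\<lambda>\<omega>. Z \<omega> $ i) \<le> cond_mean M ?A (\<lambda>\<omega>. (Z \<omega> $ i)\<^sup>2)"
    unfolding var_eq by simp
  also have "\<dots> \<le> cond_mean M ?A (\<lambda>\<omega>. (Z \<omega> $ k)\<^sup>2)" by (rule second_moment_le)
  also have "\<dots> = cond_var M ?A (\<lambda>\<omega>. Z \<omega> $ k)" unfolding var_eq mean_zero by simp
  finally show ?thesis .
qed

(* Off the conditioning coordinate every conditional variance equals a, on it it equals b <= a,
   so the trace is a * (sum_k sigma_k^2) + sigma_i^2 * (b - a). *)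
theorem trace_cond_cov_antimono:
  assumes "l \<le> 0" "0 \<le> u" "(\<sigma> j)\<^sup>2 \<le> (\<sigma> i)\<^sup>2" and Y: "\<And>\<omega> k. Y \<omega> $ k = \<nu> $ k + \<sigma> k * Z \<omega> $ k"
  shows "trace (cond_cov M (component_event i {l..u}) Y) \<le> trace (cond_cov M (component_event j {l..u}) Y)"
proof (cases "i = j")
  case False
  define a where "a = cond_var M (component_event i {l..u}) (\<lambda>\<omega>. Z \<omega> $ j)"
  define b where "b = cond_var M (component_event i {l..u}) (\<lambda>\<omega>. Z \<omega> $ i)"
  have select: "cond_var M (component_event i {l..u}) (\<lambda>\<omega>. Z \<omega> $ k) = (if k = i then b else a)"
    "cond_var M (component_event j {l..u}) (\<lambda>\<omega>. Z \<omega> $ k) = (if k = j then b else a)" for k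
    using cond_var_off_diag_eq[of i k i j "{l..u}"] cond_var_off_diag_eq[of j k i j "{l..u}"]
      cond_var_diag_eq[of "{l..u}" j i] False
    unfolding a_def b_def by simp_all
  have "b \<le> a" unfolding a_def b_def using False assms(1,2) by (rule cond_var_diag_le_off_diag)
  have integrable: "integrable M (\<lambda>\<omega>. Z \<omega> $ k)" for k
    using square_integrable_component by (rule square_integrable_imp_integrable[OF measurable_component])
  have trace_eq: "trace (cond_cov M (component_event m {l..u}) Y)
      = (\<Sum>k\<in>UNIV. (\<sigma> k)\<^sup>2 * cond_var M (component_event m {l..u}) (\<lambda>\<omega>. Z \<omega> $ k))" for m
    by (rule trace_cond_cov_affine[OF prob_space_axioms component_event_sets integrable Y]) simp
  show ?thesis unfolding trace_eq select by (rule sum_select_le[OF \<open>b \<le> a\<close> assms(3)])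
qed simp

lemma trace_cond_cov_central_interval_antimono:
  assumes "0 < \<alpha>" "\<alpha> < 1" "(\<sigma> j)\<^sup>2 \<le> (\<sigma> i)\<^sup>2" and Y: "\<And>\<omega> k. Y \<omega> $ k = \<nu> $ k + \<sigma> k * Z \<omega> $ k"
  shows "trace (cond_cov M (component_event i (central_interval M (\<lambda>\<omega>. Z \<omega> $ i) \<alpha>)) Y)
    \<le> trace (cond_cov M (component_event j (central_interval M (\<lambda>\<omega>. Z \<omega> $ j) \<alpha>)) Y)"
proof -
  obtain l u where "l \<le> 0" "0 \<le> u" "central_interval M (\<lambda>\<omega>. Z \<omega> $ i) \<alpha> = {l..u}"
    using central_interval_component[OF assms(1,2)] .
  then show ?thesis
    using trace_cond_cov_antimono[OF _ _ assms(3) Y]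
    by (simp add: central_interval_component_eq[where i=j and j=i])
qed

end

section \<open>Elliptical vectors\<close>

lemma square_integrable_add:
  fixes f g :: "'a \<Rightarrow> real"
  assumes [measurable]: "f \<in> borel_measurable M" "g \<in> borel_measurable M"
    and "integrable M (\<lambda>\<omega>. (f \<omega>)\<^sup>2)" "integrable M (\<lambda>\<omega>. (g \<omega>)\<^sup>2)"
  shows "integrable M (\<lambda>\<omega>. (f \<omega> + g \<omega>)\<^sup>2)"
proof (rule Bochner_Integration.integrable_bound)
  show "integrable M (\<lambda>\<omega>. 2 * (f \<omega>)\<^sup>2 + 2 * (g \<omega>)\<^sup>2)" using assms(3,4) by simp
  have "(f \<omega> + g \<omega>)\<^sup>2 \<le> 2 * (f \<omega>)\<^sup>2 + 2 * (g \<omega>)\<^sup>2" for \<omega>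
    using zero_le_power2[of "f \<omega> - g \<omega>"] by (simp add: power2_eq_square algebra_simps)
  then show "AE \<omega> in M. norm ((f \<omega> + g \<omega>)\<^sup>2) \<le> norm (2 * (f \<omega>)\<^sup>2 + 2 * (g \<omega>)\<^sup>2)" by simp
qed measurable

lemma square_integrable_sum:
  fixes f :: "'i \<Rightarrow> 'a \<Rightarrow> real"
  assumes "\<And>i. i \<in> S \<Longrightarrow> f i \<in> borel_measurable M" "\<And>i. i \<in> S \<Longrightarrow> integrable M (\<lambda>\<omega>. (f i \<omega>)\<^sup>2)"
  shows "integrable M (\<lambda>\<omega>. (\<Sum>i\<in>S. f i \<omega>)\<^sup>2)"
  using assms
proof (induction S rule: infinite_finite_induct)
  case (insert i S)
  then show ?case by (simp add: square_integrable_add borel_measurable_sum)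
qed simp_all

lemma orthogonal_spectral_quadratic_form:
  fixes V :: "real^'n^'n"
  assumes "orthogonal_matrix V"
  shows "(V *v v) \<bullet> ((V ** (\<chi> i j. if i = j then lam i else 0) ** transpose V) *v (V *v v))
    = (\<Sum>j\<in>UNIV. lam j * (v $ j)\<^sup>2)"
proof -
  define D :: "real^'n^'n" where "D = (\<chi> i j. if i = j then lam i else 0)"
  have "(V ** D ** transpose V) *v (V *v v) = (V ** D ** (transpose V ** V)) *v v"
    by (simp only: matrix_vector_mul_assoc matrix_mul_assoc)
  also have "\<dots> = V *v (D *v v)"
    using assms unfolding orthogonal_matrix_def by (simp add: matrix_vector_mul_assoc)
  finally have "(V ** D ** transpose V) *v (V *v v) = V *v (D *v v)" .
  moreover have "orthogonal_transformation ((*v) V)"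
    using assms by (simp add: orthogonal_transformation_matrix matrix_of_matrix_vector_mul)
  ultimately have "(V *v v) \<bullet> ((V ** D ** transpose V) *v (V *v v)) = v \<bullet> (D *v v)"
    unfolding orthogonal_transformation_def by simp
  also have "\<dots> = (\<Sum>j\<in>UNIV. lam j * (v $ j)\<^sup>2)"
    unfolding D_def inner_vec_def matrix_vector_mult_def
    by (simp add: if_distrib if_distribR sum.delta power2_eq_square mult.left_commute cong: if_cong)
  finally show ?thesis unfolding D_def .
qed

lemma char_standardized_elliptical:
  fixes X :: "'a \<Rightarrow> real^'d" and V :: "real^'d^'d" and lam :: "'d \<Rightarrow> real" and \<mu> :: "real^'d"
  assumes elliptical: "elliptical M X \<mu> (V ** (\<chi> i j. if i = j then lam i else 0) ** transpose V) \<phi>"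
    and "orthogonal_matrix V" and lam_pos: "\<And>i. 0 < lam i"
  defines "Z \<equiv> \<lambda>\<omega>. \<chi> j. (transpose V *v (X \<omega> - \<mu>)) $ j / sqrt (lam j)"
  shows "(\<integral>\<omega>. iexp (w \<bullet> Z \<omega>) \<partial>M) = \<phi> (w \<bullet> w)"
proof -
  define v where "v = (\<chi> j. w $ j / sqrt (lam j))"
  have linear: "w \<bullet> Z \<omega> = (V *v v) \<bullet> X \<omega> - (V *v v) \<bullet> \<mu>" for \<omega>
  proof -
    have "w \<bullet> Z \<omega> = v \<bullet> (transpose V *v (X \<omega> - \<mu>))"
      unfolding Z_def v_def inner_vec_def by (simp add: inner_real_def)
    also have "\<dots> = (V *v v) \<bullet> (X \<omega> - \<mu>)"
      by (metis dot_lmul_matrix inner_commute transpose_matrix_vector)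
    finally show ?thesis by (simp only: inner_diff_right)
  qed
  have "iexp (w \<bullet> Z \<omega>) = cis ((V *v v) \<bullet> X \<omega>) * cis (- ((V *v v) \<bullet> \<mu>))" for \<omega>
    unfolding linear cis_mult by (simp add: cis_conv_exp)
  then have "(\<integral>\<omega>. iexp (w \<bullet> Z \<omega>) \<partial>M)
      = (\<integral>\<omega>. cis ((V *v v) \<bullet> X \<omega>) \<partial>M) * cis (- ((V *v v) \<bullet> \<mu>))"
    by simp
  also have "\<dots> = cis ((V *v v) \<bullet> \<mu>) * \<phi> (\<Sum>j\<in>UNIV. lam j * (v $ j)\<^sup>2) * cis (- ((V *v v) \<bullet> \<mu>))"
    using elliptical orthogonal_spectral_quadratic_form[OF \<open>orthogonal_matrix V\<close>, of v lam]
    unfolding elliptical_def by simp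
  also have "\<dots> = \<phi> (\<Sum>j\<in>UNIV. lam j * (v $ j)\<^sup>2)"
    by (simp add: mult.commute mult.left_commute cis_mult)
  also have "(\<Sum>j\<in>UNIV. lam j * (v $ j)\<^sup>2) = w \<bullet> w"
    unfolding v_def inner_vec_def using lam_pos less_imp_neq[OF lam_pos, symmetric]
    by (simp add: power_divide inner_real_def power2_eq_square abs_of_pos)
  finally show ?thesis .
qed

theorem elliptical_imp_spherical_vector:
  fixes X :: "'a \<Rightarrow> real^'d" and V :: "real^'d^'d" and lam :: "'d \<Rightarrow> real"
  assumes "prob_space M" and [measurable]: "X \<in> borel_measurable M"
    and square_integrable: "\<And>j. integrable M (\<lambda>\<omega>. (X \<omega> $ j)\<^sup>2)"
    and elliptical: "elliptical M X \<mu> (V ** (\<chi> i j. if i = j then lam i else 0) ** transpose V) \<phi>"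
    and "orthogonal_matrix V" and lam_pos: "\<And>i. 0 < lam i"
  shows "spherical_vector M (\<lambda>\<omega>. \<chi> j. (transpose V *v (X \<omega> - \<mu>)) $ j / sqrt (lam j)) \<phi>"
proof -
  interpret prob_space M by fact
  define Z where "Z \<omega> = (\<chi> j. (transpose V *v (X \<omega> - \<mu>)) $ j / sqrt (lam j))" for \<omega>
  have component: "Z \<omega> $ k = (\<Sum>l\<in>UNIV. (V $ l $ k / sqrt (lam k)) * X \<omega> $ l) + - (transpose V *v \<mu>) $ k / sqrt (lam k)"
    for \<omega> k
    unfolding Z_def
    by (simp add: matrix_vector_mult_diff_distrib diff_divide_distrib sum_divide_distrib
        matrix_vector_mult_def transpose_def mult.commute sum_subtractf[symmetric] right_diff_distrib
        del: transpose_matrix_vector)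
  show ?thesis
  proof (unfold_locales, fold Z_def)
    show "Z \<in> borel_measurable M"
      unfolding Z_def matrix_vector_mult_def using lam_pos
      by (intro measurable_compose[OF assms(2)] borel_measurable_continuous_onI continuous_intros)
        (auto simp: less_imp_neq[symmetric])
    show "integrable M (\<lambda>\<omega>. (Z \<omega> $ k)\<^sup>2)" for k
    proof -
      have terms: "integrable M (\<lambda>\<omega>. (V $ l $ k / sqrt (lam k) * X \<omega> $ l)\<^sup>2)" for l
        unfolding power_mult_distrib by (rule integrable_mult_right[OF square_integrable])
      have "integrable M (\<lambda>\<omega>. (\<Sum>l\<in>UNIV. V $ l $ k / sqrt (lam k) * X \<omega> $ l)\<^sup>2)"
        using terms by (intro square_integrable_sum) simp_all
      then show ?thesis
        unfolding component by (intro square_integrable_add) auto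
    qed
    show "(\<integral>\<omega>. iexp (w \<bullet> Z \<omega>) \<partial>M) = \<phi> (w \<bullet> w)" for w
      unfolding Z_def by (rule char_standardized_elliptical[OF elliptical \<open>orthogonal_matrix V\<close> lam_pos])
  qed
qed

theorem theorem6:
  fixes M :: "'a measure" and X :: "'a \<Rightarrow> real^('d::{finite,linorder})"
    and \<Sigma> V :: "real^('d::{finite,linorder})^('d::{finite,linorder})" and lam :: "('d::{finite,linorder}) \<Rightarrow> real" and \<alpha> :: real
  assumes "prob_space M"
    and "X \<in> borel_measurable M"
    and "\<And>j. integrable M (\<lambda>\<omega>. (X \<omega> $ j)^2)"
    and "\<Sigma> = cov_matrix M X"
    and "\<exists>\<mu> \<phi>. elliptical M X \<mu> \<Sigma> \<phi>"
    and "\<And>x. x \<noteq> 0 \<Longrightarrow> x \<bullet> (\<Sigma> *v x) > 0"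
    and "orthogonal_matrix V"
    and "\<Sigma> = V ** (\<chi> i j. if i = j then lam i else 0) ** transpose V"
    and "\<And>i j. i \<le> j \<Longrightarrow> lam j \<le> lam i"
    and "\<And>i. lam i > 0"
    and "0 < \<alpha>" and "\<alpha> < 1"
    and "\<And>i. measure M {\<omega> \<in> space M. (transpose V *v X \<omega>) $ i
                 \<in> central_interval M (\<lambda>\<omega>. (transpose V *v X \<omega>) $ i) \<alpha>} > 0"
  shows "\<forall>i. trace (cond_cov M {\<omega> \<in> space M. (transpose V *v X \<omega>) $ Min UNIV
                 \<in> central_interval M (\<lambda>\<omega>. (transpose V *v X \<omega>) $ Min UNIV) \<alpha>}
                 (\<lambda>\<omega>. transpose V *v X \<omega>))
            \<le> trace (cond_cov M {\<omega> \<in> space M. (transpose V *v X \<omega>) $ i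
                 \<in> central_interval M (\<lambda>\<omega>. (transpose V *v X \<omega>) $ i) \<alpha>}
                 (\<lambda>\<omega>. transpose V *v X \<omega>))
         \<and> trace (cond_cov M {\<omega> \<in> space M. (transpose V *v X \<omega>) $ i
                 \<in> central_interval M (\<lambda>\<omega>. (transpose V *v X \<omega>) $ i) \<alpha>}
                 (\<lambda>\<omega>. transpose V *v X \<omega>))
            \<le> trace (cond_cov M {\<omega> \<in> space M. (transpose V *v X \<omega>) $ Max UNIV
                 \<in> central_interval M (\<lambda>\<omega>. (transpose V *v X \<omega>) $ Max UNIV) \<alpha>}
                 (\<lambda>\<omega>. transpose V *v X \<omega>))"
proof -
  obtain \<mu> \<phi> where elliptical: "elliptical M X \<mu> \<Sigma> \<phi>" using assms(5) by blast
  define Z where "Z \<omega> = (\<chi> j. (transpose V *v (X \<omega> - \<mu>)) $ j / sqrt (lam j))" for \<omega>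
  interpret spherical_vector M Z \<phi>
    unfolding Z_def using elliptical assms(8)
    by (intro elliptical_imp_spherical_vector[OF assms(1-3) _ assms(7,10)]) simp
  have Y: "(transpose V *v X \<omega>) $ k = (transpose V *v \<mu>) $ k + sqrt (lam k) * Z \<omega> $ k" for \<omega> k
    using assms(10)[of k] by (simp add: Z_def matrix_vector_mult_diff_distrib)
  have event: "{\<omega> \<in> space M. (transpose V *v X \<omega>) $ i \<in> central_interval M (\<lambda>\<omega>. (transpose V *v X \<omega>) $ i) \<alpha>}
      = component_event i (central_interval M (\<lambda>\<omega>. Z \<omega> $ i) \<alpha>)" for i
    unfolding Y using assms(10)[of i]
    by (intro central_interval_affine_event[OF assms(1) measurable_component assms(11,12)]) simp
  have "lam i \<le> lam (Min UNIV)" "lam (Max UNIV) \<le> lam i" for i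
    by (simp_all add: assms(9))
  then show ?thesis
    unfolding event using trace_cond_cov_central_interval_antimono[OF assms(11,12) _ Y] assms(10)
    by (simp add: less_imp_le)
qed

end
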